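(* Let $r$, $s$, $c$ and $a_n$ be any integers and let $n$ be a positive integer, and assume $V_r\neq0$. Then \[ \sum_{a_{n-1}=c}^{a_n}\sum_{a_{n-2}=c}^{a_{n-1}}\cdots\sum_{a_0=c}^{a_1}\frac{W_{ra_0+s}}{V_r^{a_0}} =(-1)^n\frac{W_{r(a_n+2n)+s}}{q^{rn}V_r^{a_n}}-\frac{1}{V_r^{c-1}}\sum_{j=0}^{n-1}(-1)^{n-j}\frac{W_{r(2n-2j+c-1)+s}}{q^{r(n-j)}}\binom{a_n+j-c}{j}. \]
   Context: Let $a,b,p,q$ be complex numbers with $p\neq0$, $q\neq0$. The Horadam sequence $W_j=W_j(a,b;p,q)$ is defined by $W_0=a$, $W_1=b$, $W_j=pW_{j-1}-qW_{j-2}$ for $j\ge2$, and extended to negative indices by $W_{-m}=(pW_{-m+1}-W_{-m+2})/q$, so the recurrence holds for all integers. $V_j=W_j(2,p;p,q)$ is the Lucas sequence of the second kind. For integers $c,m$ and a function $f$ on the integers, $\sum_{k=c}^m f(k)$ denotes the usual sum if $m\ge c$, equals $0$ if $m=c-1$, and equals $-\sum_{k=m+1}^{c-1}f(k)$ if $m\le c-2$. The nested sum $\sum_{a_{n-1}=c}^{a_n}\cdots\sum_{a_0=c}^{a_1}g(a_0)$ is the iterated sum with $n$ summation signs: innermost over $a_0$ from $c$ to $a_1$, then $a_1$ from $c$ to $a_2$, ..., outermost $a_{n-1}$ from $c$ to $a_n$. For an integer $j\ge0$ and any number $y$, $\binom{y}{j}=y(y-1)\cdots(y-j+1)/j!$.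 *)

theory Defs
  imports Complex_Main
begin

fun hor_nat :: "complex \<Rightarrow> complex \<Rightarrow> complex \<Rightarrow> complex \<Rightarrow> nat \<Rightarrow> complex" where
  "hor_nat a b p q 0 = a"
| "hor_nat a b p q (Suc 0) = b"
| "hor_nat a b p q (Suc (Suc n)) = p * hor_nat a b p q (Suc n) - q * hor_nat a b p q n"

text \<open>Horadam sequence at index -m, via W(-m) = (p W(-m+1) - W(-m+2)) / q.\<close>
fun hor_neg :: "complex \<Rightarrow> complex \<Rightarrow> complex \<Rightarrow> complex \<Rightarrow> nat \<Rightarrow> complex" where
  "hor_neg a b p q 0 = a"
| "hor_neg a b p q (Suc 0) = (p * a - b) / q"
| "hor_neg a b p q (Suc (Suc m)) = (p * hor_neg a b p q (Suc m) - hor_neg a b p q m) / q"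

definition horadam :: "complex \<Rightarrow> complex \<Rightarrow> complex \<Rightarrow> complex \<Rightarrow> int \<Rightarrow> complex" where
  "horadam a b p q j = (if 0 \<le> j then hor_nat a b p q (nat j) else hor_neg a b p q (nat (- j)))"

definition lucasV :: "complex \<Rightarrow> complex \<Rightarrow> int \<Rightarrow> complex" where
  "lucasV p q j = horadam 2 p p q j"

definition gsum :: "(int \<Rightarrow> complex) \<Rightarrow> int \<Rightarrow> int \<Rightarrow> complex" where
  "gsum f c m = (if c \<le> m then (\<Sum>k\<in>{c..m}. f k) else - (\<Sum>k\<in>{m+1..c-1}. f k))"

text \<open>n-fold nested sum: nested_sum n c g x = sum_{a_{n-1}=c}^{x} ... sum_{a_0=c}^{a_1} g a_0.\<close>
fun nested_sum :: "nat \<Rightarrow> int \<Rightarrow> (int \<Rightarrow> complex) \<Rightarrow> int \<Rightarrow> complex" where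
  "nested_sum 0 c g x = g x"
| "nested_sum (Suc n) c g x = gsum (nested_sum n c g) c x"

end

theory Submission
  imports Defs
begin

text \<open>Write \<open>R\<^sub>n(x)\<close> for the right-hand side as a function of \<open>a\<^sub>n = x\<close>; it makes sense
  for every \<open>n \<ge> 0\<close>, and \<open>R\<^sub>0\<close> is the summand. The identity
  \<open>V\<^sub>r W\<^sub>m = W\<^sub>m\<^sub>+\<^sub>r + q\<^sup>r W\<^sub>m\<^sub>-\<^sub>r\<close> makes the first term of \<open>R\<^sub>n\<close> a backward difference of the
  first term of \<open>R\<^sub>n\<^sub>+\<^sub>1\<close>, and Pascal's rule does the same for the binomial sum; hence
  \<open>R\<^sub>n(x) = R\<^sub>n\<^sub>+\<^sub>1(x) - R\<^sub>n\<^sub>+\<^sub>1(x - 1)\<close>. Since moreover \<open>R\<^sub>n\<^sub>+\<^sub>1(c - 1) = 0\<close>, every summation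
  telescopes and the nested sum equals \<open>R\<^sub>n\<close> by induction on \<open>n\<close>.\<close>

lemma horadam_of_nat: "horadam a b p q (int m) = hor_nat a b p q m"
  by (simp add: horadam_def)

lemma horadam_minus_of_nat: "horadam a b p q (- int m) = hor_neg a b p q m"
  by (cases m) (simp_all add: horadam_def del: of_nat_Suc)

lemma horadam_rec:
  assumes "q \<noteq> 0"
  shows "horadam a b p q (j + 2) = p * horadam a b p q (j + 1) - q * horadam a b p q j"
proof -
  consider "0 \<le> j" | "j = -1" | "j \<le> -2" by linarith
  then show ?thesis
  proof cases
    case 1
    then obtain m where "j = int m" by (metis nonneg_eq_int)
    then show ?thesis
      using horadam_of_nat[of a b p q "Suc (Suc m)"] horadam_of_nat[of a b p q "Suc m"]
      by (simp add: add.commute horadam_of_nat)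
  next
    case 2
    then show ?thesis using assms by (simp add: horadam_def field_simps)
  next
    case 3
    define m where "m = nat (- j) - 2"
    have "j = - int (Suc (Suc m))" "j + 1 = - int (Suc m)" "j + 2 = - int m"
      using 3 unfolding m_def by simp_all
    then show ?thesis
      using assms by (simp only: horadam_minus_of_nat) (simp add: field_simps)
  qed
qed

lemma int_recurrence_eq_0:
  fixes h :: "int \<Rightarrow> 'a::idom"
  assumes "q \<noteq> 0" and rec: "\<And>j. h (j + 2) = p * h (j + 1) - q * h j"
    and "h 0 = 0" and "h 1 = 0"
  shows "h j = 0"
proof -
  have "h j = 0 \<and> h (j + 1) = 0"
  proof (induction j rule: int_induct[where k = 0])
    case base
    then show ?case using assms by simp
  next
    case (step1 i)
    then show ?case using rec[of i] by (simp add: add.assoc)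
  next
    case (step2 i)
    then have "q * h (i - 1) = 0" using rec[of "i - 1"] by (simp add: algebra_simps)
    then show ?case using step2 \<open>q \<noteq> 0\<close> by simp
  qed
  then show ?thesis ..
qed

lemma lucasV_mult_horadam:
  assumes q: "q \<noteq> 0"
  shows "lucasV p q r * horadam a b p q m
     = horadam a b p q (m + r) + q powi r * horadam a b p q (m - r)"
proof -
  define W where "W = horadam a b p q"
  define h where "h r = lucasV p q r * W m - (W (m + r) + q powi r * W (m - r))" for r
  have W_rec: "W (j + 2) = p * W (j + 1) - q * W j" for j
    unfolding W_def by (rule horadam_rec[OF q])
  have "h r = 0"
  proof (rule int_recurrence_eq_0[OF q])
    fix j
    have V: "lucasV p q (j + 2) = p * lucasV p q (j + 1) - q * lucasV p q j"
      unfolding lucasV_def by (rule horadam_rec[OF q])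
    have W_up: "W (m + (j + 2)) = p * W (m + (j + 1)) - q * W (m + j)"
      using W_rec[of "m + j"] by (simp add: algebra_simps)
    have W_down: "W (m - j) = p * W (m - (j + 1)) - q * W (m - (j + 2))"
      using W_rec[of "m - j - 2"] by (simp add: algebra_simps)
    have powers: "q powi (j + 1) = q powi j * q" "q powi (j + 2) = q powi j * q * q"
      using q by (simp_all add: power_int_add power2_eq_square)
    show "h (j + 2) = p * h (j + 1) - q * h j"
      unfolding h_def V W_up W_down powers by (simp add: algebra_simps)
  next
    show "h 0 = 0" unfolding h_def W_def lucasV_def by (simp add: horadam_def)
  next
    have "lucasV p q 1 = p" unfolding lucasV_def by (simp add: horadam_def)
    moreover have "W (m + 1) = p * W m - q * W (m - 1)"
      using W_rec[of "m - 1"] by (simp add: algebra_simps)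
    ultimately show "h 1 = 0" unfolding h_def by simp
  qed
  then show ?thesis unfolding h_def W_def by simp
qed

lemma sum_int_telescope:
  fixes G :: "int \<Rightarrow> 'a::ab_group_add"
  assumes "m \<le> n"
  shows "(\<Sum>k\<in>{m + 1..n}. G k - G (k - 1)) = G n - G m"
  using assms
proof (induction n rule: int_ge_induct)
  case base
  then show ?case by simp
next
  case (step n)
  then have "{m + 1..n + 1} = insert (n + 1) {m + 1..n}" by auto
  then show ?case using step by simp
qed

lemma gsum_telescope: "gsum (\<lambda>k. G k - G (k - 1)) c x = G x - G (c - 1)"
proof (cases "c \<le> x")
  case True
  then show ?thesis
    using sum_int_telescope[of "c - 1" x G] by (simp add: gsum_def)
next
  case False
  then show ?thesis
    using sum_int_telescope[of x "c - 1" G] by (simp add: gsum_def)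
qed

lemma nested_sum_eq_antidifference:
  assumes init: "R 0 = g"
    and diff: "\<And>n k. R n k = R (Suc n) k - R (Suc n) (k - 1)"
    and base: "\<And>n. R (Suc n) (c - 1) = 0"
  shows "nested_sum n c g = R n"
proof (induction n)
  case 0
  show ?case using init by simp
next
  case (Suc n)
  have "nested_sum (Suc n) c g x = R (Suc n) x" for x
    unfolding nested_sum.simps Suc diff[of n] gsum_telescope base by simp
  then show ?case ..
qed

text \<open>The weights are indexed by \<open>i = n - j\<close>, so that one weight sequence serves every \<open>n\<close>.\<close>

definition binomial_sum :: "(nat \<Rightarrow> 'a::field_char_0) \<Rightarrow> int \<Rightarrow> nat \<Rightarrow> int \<Rightarrow> 'a" where
  "binomial_sum w c n x = (\<Sum>j<n. w (n - j) * (of_int (x + int j - c) gchoose j))"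

lemma binomial_sum_diff:
  "binomial_sum w c (Suc n) k - binomial_sum w c (Suc n) (k - 1) = binomial_sum w c n k"
proof -
  have pascal: "(of_int (k + int (Suc j) - c) gchoose Suc j)
      - (of_int (k - 1 + int (Suc j) - c) gchoose Suc j) = (of_int (k + int j - c) gchoose j :: 'a)"
    for j
  proof -
    have "(of_int (k + int (Suc j) - c) :: 'a) = of_int (k + int j - c) + 1"
      and "(of_int (k - 1 + int (Suc j) - c) :: 'a) = of_int (k + int j - c)"
      by simp_all
    then show ?thesis by (simp only: gbinomial_Suc_Suc) simp
  qed
  have "binomial_sum w c (Suc n) k - binomial_sum w c (Suc n) (k - 1)
    = (\<Sum>j<n. w (n - j) * ((of_int (k + int (Suc j) - c) gchoose Suc j)
        - (of_int (k - 1 + int (Suc j) - c) gchoose Suc j)))"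
    unfolding binomial_sum_def sum.lessThan_Suc_shift by (simp add: sum_subtractf algebra_simps)
  also have "\<dots> = binomial_sum w c n k"
    unfolding pascal binomial_sum_def ..
  finally show ?thesis .
qed

lemma binomial_sum_base: "binomial_sum w c (Suc n) (c - 1) = w (Suc n)"
proof -
  have "(of_int (c - 1 + int (Suc j) - c) gchoose Suc j :: 'a) = 0" for j
  proof -
    have "(of_int (c - 1 + int (Suc j) - c) :: 'a) = of_nat j" by simp
    then show ?thesis by (simp flip: binomial_gbinomial)
  qed
  then show ?thesis unfolding binomial_sum_def sum.lessThan_Suc_shift by simp
qed

definition leading_term :: "complex \<Rightarrow> complex \<Rightarrow> complex \<Rightarrow> complex \<Rightarrow> int \<Rightarrow> int \<Rightarrow> nat \<Rightarrow> int \<Rightarrow> complex"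
  where "leading_term a b p q r s n x
    = horadam a b p q (r * (x + 2 * int n) + s) / (q powi (r * int n) * lucasV p q r powi x)"

definition boundary_coeff :: "complex \<Rightarrow> complex \<Rightarrow> complex \<Rightarrow> complex \<Rightarrow> int \<Rightarrow> int \<Rightarrow> int \<Rightarrow> nat \<Rightarrow> complex"
  where "boundary_coeff a b p q r s c i
    = (-1) ^ i * horadam a b p q (r * (2 * int i + c - 1) + s) / q powi (r * int i)"

definition closed_form :: "complex \<Rightarrow> complex \<Rightarrow> complex \<Rightarrow> complex \<Rightarrow> int \<Rightarrow> int \<Rightarrow> int \<Rightarrow> nat \<Rightarrow> int \<Rightarrow> complex"
  where "closed_form a b p q r s c n x
    = (-1) ^ n * leading_term a b p q r s n x
      - 1 / lucasV p q r powi (c - 1) * binomial_sum (boundary_coeff a b p q r s c) c n x"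

lemma leading_term_diff:
  assumes q: "q \<noteq> 0" and V: "lucasV p q r \<noteq> 0"
  shows "leading_term a b p q r s n k
    = leading_term a b p q r s (Suc n) (k - 1) - leading_term a b p q r s (Suc n) k"
proof -
  define m where "m = r * (k + 2 * int n + 1) + s"
  have idx: "r * (k - 1 + 2 * int (Suc n)) + s = m" "r * (k + 2 * int (Suc n)) + s = m + r"
    "r * (k + 2 * int n) + s = m - r"
    unfolding m_def by (simp_all add: algebra_simps)
  have q_pow: "q powi (r * int (Suc n)) = q powi (r * int n) * q powi r"
    using q by (simp add: distrib_left power_int_add)
  have V_pow: "lucasV p q r powi (k - 1) = lucasV p q r powi k / lucasV p q r"
    using V by (simp add: power_int_diff)
  have W_next: "horadam a b p q (m + r)
      = lucasV p q r * horadam a b p q m - q powi r * horadam a b p q (m - r)"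
    using lucasV_mult_horadam[OF q] by simp
  show ?thesis
    unfolding leading_term_def idx q_pow V_pow W_next using q V by (simp add: field_simps)
qed

lemma closed_form_diff:
  assumes "q \<noteq> 0" and "lucasV p q r \<noteq> 0"
  shows "closed_form a b p q r s c n k
    = closed_form a b p q r s c (Suc n) k - closed_form a b p q r s c (Suc n) (k - 1)"
  unfolding closed_form_def leading_term_diff[OF assms, of a b s n k]
    binomial_sum_diff[symmetric, of _ c n k]
  by (simp add: algebra_simps)

lemma closed_form_base:
  assumes "lucasV p q r \<noteq> 0"
  shows "closed_form a b p q r s c (Suc n) (c - 1) = 0"
proof -
  have "r * (c - 1 + 2 * int (Suc n)) + s = r * (2 * int (Suc n) + c - 1) + s" by simp
  then show ?thesis
    using assms
    unfolding closed_form_def binomial_sum_base leading_term_def boundary_coeff_def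
    by (simp add: field_simps)
qed

lemma nested_sum_eq_closed_form:
  assumes "q \<noteq> 0" and "lucasV p q r \<noteq> 0"
  shows "nested_sum n c (\<lambda>x. horadam a b p q (r * x + s) / lucasV p q r powi x)
    = closed_form a b p q r s c n"
proof (rule nested_sum_eq_antidifference)
  show "closed_form a b p q r s c 0 = (\<lambda>x. horadam a b p q (r * x + s) / lucasV p q r powi x)"
    by (rule ext) (simp add: closed_form_def leading_term_def binomial_sum_def)
qed (use assms closed_form_diff closed_form_base in blast)+

theorem theorem3:
  fixes a b p q :: complex and r s c an :: int and n :: nat
  assumes "p \<noteq> 0" and "q \<noteq> 0" and "0 < n" and "lucasV p q r \<noteq> 0"
  shows "nested_sum n c (\<lambda>x. horadam a b p q (r * x + s) / (lucasV p q r powi x)) an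
    = (-1) ^ n * horadam a b p q (r * (an + 2 * int n) + s)
        / (q powi (r * int n) * lucasV p q r powi an)
      - 1 / (lucasV p q r powi (c - 1)) *
        (\<Sum>j<n. (-1) ^ (n - j) * horadam a b p q (r * (2 * int n - 2 * int j + c - 1) + s)
                 / (q powi (r * (int n - int j))) * (of_int (an + int j - c) gchoose j))"
proof -
  have "binomial_sum (boundary_coeff a b p q r s c) c n an
    = (\<Sum>j<n. (-1) ^ (n - j) * horadam a b p q (r * (2 * int n - 2 * int j + c - 1) + s)
                 / (q powi (r * (int n - int j))) * (of_int (an + int j - c) gchoose j))"
    unfolding binomial_sum_def boundary_coeff_def
    by (intro sum.cong) (auto simp: of_nat_diff)
  then show ?thesis
    unfolding nested_sum_eq_closed_form[OF assms(2,4)] closed_form_def leading_term_def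
    by simp
qed

end
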